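(* Let $\mathcal{O}$ be a nonempty set of quantum channels on $n$ qubits closed under composition, $\Psi$ a channel on $n$ qubits with $\gamma(\Psi)<\infty$, and $k\ge0$ an integer. Then for every sample $S=(z_1,\ldots,z_m)$, \[ \bar{R}_S(\mathcal{F}(\mathcal{O}))\le\bar{R}_S(\mathcal{F}(\mathcal{O}^{(k)}_\Psi))\le\gamma^*\bar{R}_S(\mathcal{F}(\mathcal{O})),\qquad \bar{G}_S(\mathcal{F}(\mathcal{O}))\le\bar{G}_S(\mathcal{F}(\mathcal{O}^{(k)}_\Psi))\le\gamma^*\bar{G}_S(\mathcal{F}(\mathcal{O})), \] where $\gamma^*=\min\{(1+2\gamma(\Psi))^k,1+2\gamma_{\max,n}\}$.
   Context: A quantum channel on $n$ qubits is a completely positive trace-preserving linear map on $2^n\times2^n$ complex matrices. For a channel $\Phi$, $f_\Phi(x,y)=\mathrm{Tr}[\Phi(|x\rangle\langle x|)\,|y\rangle\langle y|]$; $\mathcal{F}(\Omega)=\{f_\Phi:\Phi\in\Omega\}$. $\bar{R}_S(\mathcal{G})=\mathbb{E}\sup_{h\in\mathcal{G}}\frac1m|\sum_{i=1}^m\epsilon_i h(z_i)|$ with $\epsilon_i$ i.i.d. uniform on $\{\pm1\}$, and $\bar{G}_S(\mathcal{G})=\mathbb{E}\sup_{h\in\mathcal{G}}\frac1m|\sum_{i=1}^m g_i h(z_i)|$ with $g_i$ i.i.d. $\mathcal{N}(0,1)$. Free robustness w.r.t. $\mathcal{O}$: $\gamma(\Phi)=\inf\{\lambda\ge0:\exists\,\Phi'\in\mathrm{Conv}(\mathcal{O}),\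 (\Phi+\lambda\Phi')/(1+\lambda)\in\mathrm{Conv}(\mathcal{O})\}$; $\gamma_{\max,n}=\sup$ of $\gamma(\Phi)$ over all channels on $n$ qubits (if infinite, $\gamma^*=(1+2\gamma(\Psi))^k$). $\mathcal{O}^{(k)}_\Psi$ is the set of all finite compositions of elements of $\mathcal{O}\cup\{\Psi\}$ in which $\Psi$ appears at most $k$ times. *)

theory Defs
  imports "HOL-Probability.Probability" "Jordan_Normal_Form.Matrix"
begin

text \<open>Matrices on n qubits: complex 2^n x 2^n matrices (JNF type complex mat).  By convention
  a channel sends every matrix outside the carrier to the zero matrix, so that
  channels are determined by their action on 2^n x 2^n matrices.\<close>

type_synonym qmap = "complex mat \<Rightarrow> complex mat"

definition mtrace :: "complex mat \<Rightarrow> complex" where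
  "mtrace A = (\<Sum>i<dim_row A. A $$ (i,i))"

definition psd :: "nat \<Rightarrow> complex mat \<Rightarrow> bool" where
  "psd d A \<longleftrightarrow> A \<in> carrier_mat d d \<and>
     (\<forall>i<d. \<forall>j<d. A $$ (i,j) = cnj (A $$ (j,i))) \<and>
     (\<forall>v :: nat \<Rightarrow> complex.
        Im (\<Sum>i<d. \<Sum>j<d. cnj (v i) * A $$ (i,j) * v j) = 0 \<and>
        Re (\<Sum>i<d. \<Sum>j<d. cnj (v i) * A $$ (i,j) * v j) \<ge> 0)"

text \<open>(id_k \<otimes> Phi) applied to a (k d) x (k d) matrix viewed as a k x k block matrix
  of d x d blocks.\<close>
definition ampl :: "nat \<Rightarrow> nat \<Rightarrow> qmap \<Rightarrow> complex mat \<Rightarrow> complex mat" where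
  "ampl d k \<Phi> X = mat (k*d) (k*d) (\<lambda>(i,j).
      \<Phi> (mat d d (\<lambda>(r,s). X $$ ((i div d)*d + r, (j div d)*d + s))) $$ (i mod d, j mod d))"

definition channel :: "nat \<Rightarrow> qmap \<Rightarrow> bool" where
  "channel n \<Phi> \<longleftrightarrow> (let d = 2^n in
     (\<forall>X \<in> carrier_mat d d. \<Phi> X \<in> carrier_mat d d) \<and>
     (\<forall>X. X \<notin> carrier_mat d d \<longrightarrow> \<Phi> X = 0\<^sub>m d d) \<and>
     (\<forall>X \<in> carrier_mat d d. \<forall>Y \<in> carrier_mat d d. \<forall>c::complex.
        \<Phi> (c \<cdot>\<^sub>m X + Y) = c \<cdot>\<^sub>m \<Phi> X + \<Phi> Y) \<and>
     (\<forall>X \<in> carrier_mat d d. mtrace (\<Phi> X) = mtrace X) \<and>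
     (\<forall>k X. psd (k*d) X \<longrightarrow> psd (k*d) (ampl d k \<Phi> X)))"

definition proj :: "nat \<Rightarrow> nat \<Rightarrow> complex mat" where
  "proj n x = mat (2^n) (2^n) (\<lambda>(i,j). if i = x \<and> j = x then 1 else 0)"

definition fPhi :: "nat \<Rightarrow> qmap \<Rightarrow> nat \<times> nat \<Rightarrow> real" where
  "fPhi n \<Phi> = (\<lambda>(x,y). Re (mtrace (\<Phi> (proj n x) * proj n y)))"

definition Fset :: "nat \<Rightarrow> qmap set \<Rightarrow> (nat \<times> nat \<Rightarrow> real) set" where
  "Fset n \<Omega> = fPhi n ` \<Omega>"

definition signs :: "nat \<Rightarrow> (nat \<Rightarrow> real) set" where
  "signs m = {e. (\<forall>i<m. e i \<in> {-1, 1}) \<and> (\<forall>i\<ge>m. e i = 0)}"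

definition rademacher :: "nat \<Rightarrow> (nat \<Rightarrow> 'z) \<Rightarrow> ('z \<Rightarrow> real) set \<Rightarrow> real" where
  "rademacher m z G = (\<Sum>e\<in>signs m. (SUP h\<in>G. \<bar>\<Sum>i<m. e i * h (z i)\<bar> / real m)) / 2 ^ m"

definition gaussian :: "nat \<Rightarrow> (nat \<Rightarrow> 'z) \<Rightarrow> ('z \<Rightarrow> real) set \<Rightarrow> real" where
  "gaussian m z G = (\<integral>g. (SUP h\<in>G. \<bar>\<Sum>i<m. g i * h (z i)\<bar> / real m)
      \<partial>(PiM {..<m} (\<lambda>_. density lborel std_normal_density)))"

definition in_conv :: "nat \<Rightarrow> qmap set \<Rightarrow> qmap \<Rightarrow> bool" where
  "in_conv n Ob \<Phi> \<longleftrightarrow> (\<exists>(I::nat set) c \<Phi>s. finite I \<and> (\<forall>i\<in>I. c i \<ge> (0::real) \<and> \<Phi>s i \<in> Ob) \<and>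
      sum c I = 1 \<and>
      (\<forall>X \<in> carrier_mat (2^n) (2^n).
         \<Phi> X \<in> carrier_mat (2^n) (2^n) \<and>
         (\<forall>a<2^n. \<forall>b<2^n. \<Phi> X $$ (a,b) = (\<Sum>i\<in>I. complex_of_real (c i) * \<Phi>s i X $$ (a,b)))))"

definition robustness :: "nat \<Rightarrow> qmap set \<Rightarrow> qmap \<Rightarrow> ereal" where
  "robustness n Ob \<Phi> = Inf (ereal ` {l. l \<ge> 0 \<and> (\<exists>\<Phi>'. in_conv n Ob \<Phi>' \<and>
      in_conv n Ob (\<lambda>X. complex_of_real (1 / (1 + l)) \<cdot>\<^sub>m
                         (\<Phi> X + complex_of_real l \<cdot>\<^sub>m \<Phi>' X)))})"

definition robustness_max :: "nat \<Rightarrow> qmap set \<Rightarrow> ereal" where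
  "robustness_max n Ob = (SUP \<Phi>\<in>{\<Phi>. channel n \<Phi>}. robustness n Ob \<Phi>)"

text \<open>Ob^(k)_Psi: finite nonempty compositions of elements of Ob and Psi, Psi used at most k
  times (None marks an occurrence of Psi).\<close>
definition compose_seq :: "qmap \<Rightarrow> qmap option list \<Rightarrow> qmap" where
  "compose_seq \<Psi> xs = foldr (\<lambda>a f. (case a of None \<Rightarrow> \<Psi> | Some \<Phi> \<Rightarrow> \<Phi>) \<circ> f) xs id"

definition Ok :: "qmap set \<Rightarrow> qmap \<Rightarrow> nat \<Rightarrow> qmap set" where
  "Ok Ob \<Psi> k = {compose_seq \<Psi> xs | xs. xs \<noteq> [] \<and> (\<forall>a\<in>set xs. a = None \<or> the a \<in> Ob) \<and>
      length (filter (\<lambda>a. a = None) xs) \<le> k}"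

definition gamma_star :: "nat \<Rightarrow> qmap set \<Rightarrow> qmap \<Rightarrow> nat \<Rightarrow> ereal" where
  "gamma_star n Ob \<Psi> k = min ((1 + 2 * robustness n Ob \<Psi>) ^ k) (1 + 2 * robustness_max n Ob)"

end

theory Submission
  imports Defs
begin

text \<open>On 2^n x 2^n matrices every element C of O^(k)_\<Psi> is a real linear combination of
  elements of O whose coefficients have absolute sum (weight) at most any t > \<gamma>*. A robustness
  witness \<lambda> for \<Psi> gives \<Psi> = (1 + \<lambda>) \<Phi>'' - \<lambda> \<Phi>' with \<Phi>', \<Phi>'' convex combinations of O,
  a combination of weight 1 + 2 \<lambda>; as O is closed under composition, weights multiply along a
  composition, which gives (1 + 2 \<gamma>(\<Psi>))^k, and the same argument applied to C itself gives
  1 + 2 \<gamma>(C) \<le> 1 + 2 \<gamma>_max. Since \<Phi> \<mapsto> f_\<Phi> is linear, f_C is the same combination of functions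
  in F(O), so each supremum defining the empirical complexities grows at most by the weight. The
  lower bounds hold because O \<subseteq> O^(k)_\<Psi>.\<close>

definition weight :: "(real \<times> 'a) list \<Rightarrow> real" where
  "weight L = (\<Sum>(c, x)\<leftarrow>L. \<bar>c\<bar>)"

lemma weight_Nil [simp]: "weight [] = 0"
  and weight_Cons [simp]: "weight ((c, x) # L) = \<bar>c\<bar> + weight L"
  and weight_append [simp]: "weight (L @ L') = weight L + weight L'"
  by (simp_all add: weight_def)

lemma weight_nonneg: "0 \<le> weight L"
  unfolding weight_def by (induction L) auto

lemma weight_map_scale: "weight (map (\<lambda>(a, x). (c * a, f x)) L) = \<bar>c\<bar> * weight L"
  unfolding weight_def by (induction L) (auto simp: abs_mult algebra_simps)

lemma weight_map_snd: "weight (map (\<lambda>(a, x). (a, f x)) L) = weight L"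
  unfolding weight_def by (induction L) auto

lemma abs_sum_list_le_weight:
  assumes "\<And>c x. (c, x) \<in> set L \<Longrightarrow> \<bar>f x\<bar> \<le> K"
  shows "\<bar>\<Sum>(c, x)\<leftarrow>L. c * f x\<bar> \<le> weight L * K"
  using assms
proof (induction L)
  case (Cons p L)
  obtain c x where p: "p = (c, x)" by fastforce
  have "\<bar>c * f x\<bar> \<le> \<bar>c\<bar> * K"
    using Cons.prems[of c x] by (simp add: p abs_mult mult_left_mono)
  moreover have "\<bar>\<Sum>(c, x)\<leftarrow>L. c * f x\<bar> \<le> weight L * K"
    using Cons by auto
  ultimately show ?case
    by (simp add: p algebra_simps)
qed simp

section \<open>Empirical complexities of function classes\<close>

definition sup_correlation ::
    "nat \<Rightarrow> (nat \<Rightarrow> 'z) \<Rightarrow> ('z \<Rightarrow> real) set \<Rightarrow> (nat \<Rightarrow> real) \<Rightarrow> real" where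
  "sup_correlation m z G w = (SUP h\<in>G. \<bar>\<Sum>i<m. w i * h (z i)\<bar> / real m)"

lemma rademacher_eq_sup_correlation:
  "rademacher m z G = (\<Sum>e\<in>signs m. sup_correlation m z G e) / 2 ^ m"
  by (simp add: rademacher_def sup_correlation_def)

lemma gaussian_eq_sup_correlation:
  "gaussian m z G = (\<integral>g. sup_correlation m z G g \<partial>(PiM {..<m} (\<lambda>_. density lborel std_normal_density)))"
  by (simp add: gaussian_def sup_correlation_def)

lemma abs_correlation_le:
  assumes "\<forall>i<m. \<bar>h (z i)\<bar> \<le> B"
  shows "\<bar>\<Sum>i<m. w i * h (z i)\<bar> / real m \<le> B * (\<Sum>i<m. \<bar>w i\<bar>) / real m"
proof -
  have "\<bar>\<Sum>i<m. w i * h (z i)\<bar> \<le> (\<Sum>i<m. \<bar>w i\<bar> * B)"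
    using assms by (intro order.trans[OF sum_abs sum_mono]) (auto simp: abs_mult mult_left_mono)
  then show ?thesis
    by (simp add: divide_right_mono sum_distrib_left mult.commute)
qed

lemma bdd_above_correlations:
  assumes "\<forall>h\<in>G. \<forall>i<m. \<bar>h (z i)\<bar> \<le> B"
  shows "bdd_above ((\<lambda>h. \<bar>\<Sum>i<m. w i * h (z i)\<bar> / real m) ` G)"
  using abs_correlation_le assms by (intro bdd_aboveI2) blast

lemma correlation_le_sup_correlation:
  assumes "\<forall>h\<in>G. \<forall>i<m. \<bar>h (z i)\<bar> \<le> B" and "h \<in> G"
  shows "\<bar>\<Sum>i<m. w i * h (z i)\<bar> / real m \<le> sup_correlation m z G w"
  unfolding sup_correlation_def using bdd_above_correlations[OF assms(1)] assms(2)
  by (rule cSUP_upper2) simp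

lemma sup_correlation_nonneg:
  assumes "G \<noteq> {}" and "\<forall>h\<in>G. \<forall>i<m. \<bar>h (z i)\<bar> \<le> B"
  shows "0 \<le> sup_correlation m z G w"
proof -
  obtain h where h: "h \<in> G" using assms(1) by blast
  have "0 \<le> \<bar>\<Sum>i<m. w i * h (z i)\<bar> / real m" by simp
  also have "\<dots> \<le> sup_correlation m z G w" by (rule correlation_le_sup_correlation[OF assms(2) h])
  finally show ?thesis .
qed

lemma sup_correlation_mono:
  assumes "G \<noteq> {}" "G \<subseteq> G'" and "\<forall>h\<in>G'. \<forall>i<m. \<bar>h (z i)\<bar> \<le> B"
  shows "sup_correlation m z G w \<le> sup_correlation m z G' w"
  unfolding sup_correlation_def
  using assms bdd_above_correlations[OF assms(3)] by (intro cSUP_subset_mono) auto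

definition combination_on_sample ::
    "nat \<Rightarrow> (nat \<Rightarrow> 'z) \<Rightarrow> ('z \<Rightarrow> real) set \<Rightarrow> real \<Rightarrow> ('z \<Rightarrow> real) \<Rightarrow> bool" where
  "combination_on_sample m z G t h \<longleftrightarrow>
     (\<exists>L. snd ` set L \<subseteq> G \<and> weight L \<le> t \<and> (\<forall>i<m. h (z i) = (\<Sum>(c, g)\<leftarrow>L. c * g (z i))))"

lemma combination_on_sample_bounded:
  assumes "combination_on_sample m z G t h" "\<forall>g\<in>G. \<forall>i<m. \<bar>g (z i)\<bar> \<le> B" "0 \<le> B" "i < m"
  shows "\<bar>h (z i)\<bar> \<le> t * B"
proof -
  obtain L where L: "snd ` set L \<subseteq> G" "weight L \<le> t"
    "\<forall>i<m. h (z i) = (\<Sum>(c, g)\<leftarrow>L. c * g (z i))"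
    using assms(1) unfolding combination_on_sample_def by blast
  have "\<bar>h (z i)\<bar> \<le> weight L * B"
    unfolding L(3)[rule_format, OF assms(4)]
    using L(1) assms(2,4) by (intro abs_sum_list_le_weight) force
  also have "\<dots> \<le> t * B" using L(2) assms(3) by (rule mult_right_mono)
  finally show ?thesis .
qed

lemma sup_correlation_le_mult:
  assumes "G \<noteq> {}" "G' \<noteq> {}" and bounded: "\<forall>g\<in>G. \<forall>i<m. \<bar>g (z i)\<bar> \<le> B"
    and comb: "\<forall>h\<in>G'. combination_on_sample m z G t h"
  shows "sup_correlation m z G' w \<le> t * sup_correlation m z G w"
  unfolding sup_correlation_def[of m z G']
proof (rule cSUP_least[OF assms(2)])
  fix h assume "h \<in> G'"
  then obtain L where L: "snd ` set L \<subseteq> G" "weight L \<le> t"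
    "\<forall>i<m. h (z i) = (\<Sum>(c, g)\<leftarrow>L. c * g (z i))"
    using comb unfolding combination_on_sample_def by blast
  let ?S = "sup_correlation m z G w"
  have "(\<Sum>i<m. w i * h (z i)) = (\<Sum>i<m. w i * (\<Sum>(c, g)\<leftarrow>L. c * g (z i)))"
    using L(3) by simp
  also have "\<dots> / real m = (\<Sum>(c, g)\<leftarrow>L. c * ((\<Sum>i<m. w i * g (z i)) / real m))"
    by (induction L) (auto simp: sum.distrib sum_distrib_left add_divide_distrib algebra_simps)
  also have "\<bar>\<dots>\<bar> \<le> weight L * ?S"
    using L(1) by (intro abs_sum_list_le_weight)
      (force simp: abs_divide intro: correlation_le_sup_correlation[OF bounded])
  also have "\<dots> \<le> t * ?S"
    using L(2) sup_correlation_nonneg[OF assms(1) bounded] by (rule mult_right_mono)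
  finally show "\<bar>\<Sum>i<m. w i * h (z i)\<bar> / real m \<le> t * ?S" by simp
qed

lemma sup_correlation_borel_measurable:
  assumes "G \<noteq> {}" and bounded: "\<forall>h\<in>G. \<forall>i<m. \<bar>h (z i)\<bar> \<le> B"
  shows "sup_correlation m z G \<in> borel_measurable borel"
proof (rule borel_measurableI_greater)
  fix y :: real
  have "{w. y < sup_correlation m z G w} = (\<Union>h\<in>G. {w. y < \<bar>\<Sum>i<m. w i * h (z i)\<bar> / real m})"
    unfolding sup_correlation_def using less_cSUP_iff[OF assms(1) bdd_above_correlations[OF bounded]]
    by auto
  moreover have "open {w::nat \<Rightarrow> real. y < \<bar>\<Sum>i<m. w i * h (z i)\<bar> / real m}" for h
    unfolding divide_inverse
    by (rule open_Collect_less, intro continuous_intros, rule continuous_on_mult_right)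
       (intro continuous_intros continuous_on_product_coordinates)+
  ultimately show "{w \<in> space borel. y < sup_correlation m z G w} \<in> sets borel"
    by (auto intro!: borel_open)
qed

lemma sup_correlation_integrable:
  assumes "G \<noteq> {}" and bounded: "\<forall>h\<in>G. \<forall>i<m. \<bar>h (z i)\<bar> \<le> B"
  shows "integrable (PiM {..<m} (\<lambda>_. density lborel std_normal_density)) (sup_correlation m z G)"
proof -
  let ?N = "density lborel std_normal_density"
  let ?M = "PiM {..<m} (\<lambda>_. ?N)"
  have coordinate: "(\<lambda>g. g i) \<in> borel_measurable ?M" if "i < m" for i
    using measurable_component_singleton[of i "{..<m}" "\<lambda>_. ?N"] that
      measurable_cong_sets[OF refl sets_density] by simp
  \<comment> \<open>points of the product space are undefined off \<open>{..<m}\<close>; only the first m coordinates matter\<close>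
  define restrict where "restrict g = (\<lambda>i. if i < m then g i else (0::real))" for g :: "nat \<Rightarrow> real"
  have "restrict \<in> borel_measurable ?M"
  proof (rule measurable_coordinatewise_then_product)
    show "(\<lambda>g. restrict g i) \<in> borel_measurable ?M" for i
      by (cases "i < m") (simp_all add: restrict_def coordinate)
  qed
  moreover have "sup_correlation m z G = sup_correlation m z G \<circ> restrict"
    unfolding sup_correlation_def restrict_def by (intro ext SUP_cong refl) (auto intro!: sum.cong)
  ultimately have measurable: "sup_correlation m z G \<in> borel_measurable ?M"
    using sup_correlation_borel_measurable[OF assms] by (metis measurable_comp)
  have abs_coordinate: "integrable ?M (\<lambda>g. \<bar>g i\<bar>)" if i: "i < m" for i
  proof -
    have "integrable ?N (\<lambda>x. \<bar>x\<bar>::real)"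
      using integrable_std_normal_moment_abs[of 1] by (subst integrable_density) auto
    then have "integrable (distr ?M ?N (\<lambda>g. g i)) (\<lambda>x. \<bar>x\<bar>::real)"
      using distr_PiM_component[of "{..<m}" "\<lambda>_. ?N" i] prob_space_normal_density i by simp
    then show ?thesis
      using measurable_component_singleton[of i "{..<m}" "\<lambda>_. ?N"] i
      by (subst (asm) integrable_distr_eq) auto
  qed
  have "integrable ?M (\<lambda>g. B * (\<Sum>i<m. \<bar>g i\<bar>) / real m)"
    using abs_coordinate by (intro integrable_divide integrable_mult_right integrable_sum) auto
  moreover have "norm (sup_correlation m z G g) \<le> norm (B * (\<Sum>i<m. \<bar>g i\<bar>) / real m)" for g
  proof -
    have "sup_correlation m z G g \<le> B * (\<Sum>i<m. \<bar>g i\<bar>) / real m"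
      unfolding sup_correlation_def using bounded abs_correlation_le by (intro cSUP_least[OF assms(1)]) blast
    moreover have "B * (\<Sum>i<m. \<bar>g i\<bar>) / real m \<le> \<bar>B * (\<Sum>i<m. \<bar>g i\<bar>)\<bar> / real m"
      by (rule divide_right_mono) auto
    ultimately show ?thesis
      using sup_correlation_nonneg[OF assms] by simp
  qed
  ultimately show ?thesis
    using measurable by (intro Bochner_Integration.integrable_bound[OF _ measurable]) auto
qed

lemma rademacher_le_mult:
  assumes "\<And>w. sup_correlation m z G' w \<le> t * sup_correlation m z G w"
  shows "rademacher m z G' \<le> t * rademacher m z G"
  unfolding rademacher_eq_sup_correlation times_divide_eq_right sum_distrib_left
  by (intro divide_right_mono sum_mono assms) simp

lemma gaussian_le_mult:
  assumes "G \<noteq> {}" "\<forall>h\<in>G. \<forall>i<m. \<bar>h (z i)\<bar> \<le> B" "0 \<le> t"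
    and "\<And>w. sup_correlation m z G' w \<le> t * sup_correlation m z G w"
  shows "gaussian m z G' \<le> t * gaussian m z G"
  unfolding gaussian_eq_sup_correlation integral_mult_right_zero[symmetric]
  using assms sup_correlation_nonneg[OF assms(1,2)]
  by (intro integral_mono' integrable_mult_right sup_correlation_integrable) auto

lemma rademacher_nonneg:
  assumes "G \<noteq> {}" "\<forall>h\<in>G. \<forall>i<m. \<bar>h (z i)\<bar> \<le> B"
  shows "0 \<le> rademacher m z G"
  unfolding rademacher_eq_sup_correlation
  by (intro divide_nonneg_nonneg sum_nonneg sup_correlation_nonneg[OF assms]) simp

lemma gaussian_nonneg:
  assumes "G \<noteq> {}" "\<forall>h\<in>G. \<forall>i<m. \<bar>h (z i)\<bar> \<le> B"
  shows "0 \<le> gaussian m z G"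
  unfolding gaussian_eq_sup_correlation
  by (intro integral_nonneg_AE AE_I2 sup_correlation_nonneg[OF assms])

section \<open>Channels\<close>

lemma channel_carrier: "channel n \<Phi> \<Longrightarrow> X \<in> carrier_mat (2^n) (2^n) \<Longrightarrow> \<Phi> X \<in> carrier_mat (2^n) (2^n)"
  by (simp add: channel_def Let_def)

lemma channel_outside: "channel n \<Phi> \<Longrightarrow> X \<notin> carrier_mat (2^n) (2^n) \<Longrightarrow> \<Phi> X = 0\<^sub>m (2^n) (2^n)"
  by (simp add: channel_def Let_def)

lemma channel_linear:
  "channel n \<Phi> \<Longrightarrow> X \<in> carrier_mat (2^n) (2^n) \<Longrightarrow> Y \<in> carrier_mat (2^n) (2^n) \<Longrightarrow>
    \<Phi> (c \<cdot>\<^sub>m X + Y) = c \<cdot>\<^sub>m \<Phi> X + \<Phi> Y"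
  by (simp add: channel_def Let_def)

lemma channel_trace: "channel n \<Phi> \<Longrightarrow> X \<in> carrier_mat (2^n) (2^n) \<Longrightarrow> mtrace (\<Phi> X) = mtrace X"
  by (simp add: channel_def Let_def)

lemma channel_ampl_psd: "channel n \<Phi> \<Longrightarrow> psd (k * 2^n) X \<Longrightarrow> psd (k * 2^n) (ampl (2^n) k \<Phi> X)"
  by (simp add: channel_def Let_def)

lemma channel_zero: assumes "channel n \<Phi>" shows "\<Phi> (0\<^sub>m (2^n) (2^n)) = 0\<^sub>m (2^n) (2^n)"
proof -
  let ?O = "0\<^sub>m (2^n) (2^n) :: complex mat"
  have "(-1::complex) \<cdot>\<^sub>m ?O + ?O = ?O" by (rule eq_matI) auto
  then have "\<Phi> ?O = (-1) \<cdot>\<^sub>m \<Phi> ?O + \<Phi> ?O" using channel_linear[OF assms, of ?O ?O "-1"] by simp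
  also have "\<dots> = ?O" using channel_carrier[OF assms, of ?O] by (intro eq_matI) auto
  finally show ?thesis .
qed

definition block :: "nat \<Rightarrow> complex mat \<Rightarrow> nat \<Rightarrow> nat \<Rightarrow> complex mat" where
  "block d X I J = mat d d (\<lambda>(r, s). X $$ (I * d + r, J * d + s))"

lemma ampl_block:
  "ampl d k \<Phi> X = mat (k * d) (k * d) (\<lambda>(i, j). \<Phi> (block d X (i div d) (j div d)) $$ (i mod d, j mod d))"
  by (simp add: ampl_def block_def)

lemma block_ampl:
  assumes d: "0 < d" and B: "\<forall>Y\<in>carrier_mat d d. B Y \<in> carrier_mat d d" and IJ: "I < k" "J < k"
  shows "block d (ampl d k B X) I J = B (block d X I J)"
proof -
  have c: "B (block d X I J) \<in> carrier_mat d d" using B by (simp add: block_def)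
  have bound: "I * d + r < k * d" if "I < k" "r < d" for I r
  proof -
    have "(I + 1) * d \<le> k * d" using that(1) by (intro mult_le_mono1) simp
    then show ?thesis using that(2) by simp
  qed
  show ?thesis
  proof (rule eq_matI)
    fix r s assume "r < dim_row (B (block d X I J))" "s < dim_col (B (block d X I J))"
    then have rs: "r < d" "s < d" using c by auto
    have "(I * d + r) div d = I" "(J * d + s) div d = J" "(I * d + r) mod d = r" "(J * d + s) mod d = s"
      using rs d by auto
    then show "block d (ampl d k B X) I J $$ (r, s) = B (block d X I J) $$ (r, s)"
      unfolding ampl_block using rs IJ bound by (simp add: block_def)
  qed (use c in \<open>simp_all add: block_def\<close>)
qed

lemma ampl_comp:
  assumes "0 < d" "\<forall>Y\<in>carrier_mat d d. B Y \<in> carrier_mat d d"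
  shows "ampl d k (A \<circ> B) X = ampl d k A (ampl d k B X)"
proof (rule eq_matI)
  fix i j assume "i < dim_row (ampl d k A (ampl d k B X))" "j < dim_col (ampl d k A (ampl d k B X))"
  then have ij: "i < k * d" "j < k * d" by (auto simp: ampl_block)
  then have "i div d < k" "j div d < k" using assms(1) by (auto simp: div_less_iff_less_mult)
  then show "ampl d k (A \<circ> B) X $$ (i, j) = ampl d k A (ampl d k B X) $$ (i, j)"
    using ij block_ampl[OF assms] by (simp add: ampl_block)
qed (simp_all add: ampl_block)

lemma channel_comp:
  assumes A: "channel n A" and B: "channel n B"
  shows "channel n (A \<circ> B)"
proof -
  have "ampl (2^n) k (A \<circ> B) X = ampl (2^n) k A (ampl (2^n) k B X)" for k X
    using channel_carrier[OF B] by (intro ampl_comp) auto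
  then show ?thesis
    unfolding channel_def Let_def
    using channel_carrier[OF A] channel_carrier[OF B] channel_outside[OF B] channel_zero[OF A]
      channel_linear[OF A] channel_linear[OF B] channel_trace[OF A] channel_trace[OF B]
      channel_ampl_psd[OF A] channel_ampl_psd[OF B]
    by simp
qed

lemma proj_carrier [simp]: "proj n x \<in> carrier_mat (2^n) (2^n)"
  by (simp add: proj_def)

lemma mtrace_mult_proj:
  assumes "A \<in> carrier_mat (2^n) (2^n)" "y < 2^n"
  shows "mtrace (A * proj n y) = A $$ (y, y)"
proof -
  have "(A * proj n y) $$ (i, i) = (if i = y then A $$ (y, y) else 0)" if "i < 2^n" for i
    using assms that by (simp add: proj_def scalar_prod_def lessThan_atLeast0 if_distrib cong: if_cong)
  then show ?thesis
    using assms by (simp add: mtrace_def)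
qed

lemma fPhi_eq_diagonal:
  "\<Phi> (proj n x) \<in> carrier_mat (2^n) (2^n) \<Longrightarrow> y < 2^n \<Longrightarrow> fPhi n \<Phi> (x, y) = Re (\<Phi> (proj n x) $$ (y, y))"
  by (simp add: fPhi_def mtrace_mult_proj)

lemma psd_diagonal_nonneg:
  assumes "psd d A" "i < d"
  shows "0 \<le> Re (A $$ (i, i))"
proof -
  define v :: "nat \<Rightarrow> complex" where "v k = (if k = i then 1 else 0)" for k
  have "0 \<le> Re (\<Sum>k<d. \<Sum>l<d. cnj (v k) * A $$ (k, l) * v l)"
    using assms(1) unfolding psd_def by blast
  moreover have "(\<Sum>k<d. \<Sum>l<d. cnj (v k) * A $$ (k, l) * v l) = A $$ (i, i)"
    using assms(2) unfolding v_def
    by (simp add: if_distrib[where f = cnj] if_distrib[where f = "\<lambda>x. _ * x"]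
        if_distrib[where f = "\<lambda>x. x * _"] cong: if_cong)
  ultimately show ?thesis by simp
qed

lemma psd_proj: assumes "x < 2^n" shows "psd (2^n) (proj n x)"
proof -
  have "(if i = x \<and> j = x then c else 0) = (if j = x then if i = x then c else 0 else 0)" for i j and c :: complex
    by simp
  then have "(\<Sum>i<2^n. \<Sum>j<2^n. cnj (v i) * proj n x $$ (i, j) * v j) = cnj (v x) * v x" for v
    using assms by (simp add: proj_def if_distrib[where f = "\<lambda>x. _ * x"]
        if_distrib[where f = "\<lambda>x. x * _"] cong: if_cong)
  moreover have "Im (cnj c * c) = 0 \<and> 0 \<le> Re (cnj c * c)" for c :: complex
    by (simp add: algebra_simps)
  ultimately show ?thesis
    unfolding psd_def by (auto simp: proj_def)
qed

lemma ampl_one: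
  assumes "X \<in> carrier_mat d d" "\<Phi> X \<in> carrier_mat d d"
  shows "ampl d 1 \<Phi> X = \<Phi> X"
proof -
  have "block d X 0 0 = X" using assms(1) by (intro eq_matI) (auto simp: block_def)
  then show ?thesis unfolding ampl_block using assms(2) by (intro eq_matI) auto
qed

lemma channel_fPhi_bounds:
  assumes ch: "channel n \<Phi>" and "x < 2^n" "y < 2^n"
  shows "0 \<le> fPhi n \<Phi> (x, y)" "fPhi n \<Phi> (x, y) \<le> 1"
proof -
  let ?d = "2^n :: nat" and ?M = "\<Phi> (proj n x)"
  have M: "?M \<in> carrier_mat ?d ?d" using channel_carrier[OF ch] by simp
  have "psd (1 * ?d) (ampl ?d 1 \<Phi> (proj n x))"
    by (rule channel_ampl_psd[OF ch]) (use psd_proj[OF assms(2)] in simp)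
  then have "psd ?d ?M" using ampl_one[where \<Phi> = \<Phi>, OF proj_carrier M] by simp
  then have diagonal: "0 \<le> Re (?M $$ (i, i))" if "i < ?d" for i
    using psd_diagonal_nonneg that by blast
  have "mtrace (proj n x) = 1"
    using assms(2) by (simp add: mtrace_def proj_def)
  then have "mtrace ?M = 1" using channel_trace[OF ch proj_carrier] by simp
  then have "(\<Sum>i<?d. Re (?M $$ (i, i))) = 1"
    using M by (simp add: mtrace_def flip: Re_sum)
  then have "Re (?M $$ (y, y)) \<le> 1"
    using member_le_sum[of y "{..<?d}" "\<lambda>i. Re (?M $$ (i, i))"] diagonal assms(3) by simp
  then show "0 \<le> fPhi n \<Phi> (x, y)" "fPhi n \<Phi> (x, y) \<le> 1"
    using fPhi_eq_diagonal[where \<Phi> = \<Phi>, OF M assms(3)] diagonal[OF assms(3)] by simp_all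
qed

section \<open>Quasi-probability decompositions\<close>

definition lincomb :: "nat \<Rightarrow> (real \<times> qmap) list \<Rightarrow> qmap" where
  "lincomb d L X = mat d d (\<lambda>(a, b). \<Sum>(c, B)\<leftarrow>L. complex_of_real c * B X $$ (a, b))"

lemma lincomb_carrier [simp]: "lincomb d L X \<in> carrier_mat d d"
  and lincomb_dim [simp]: "dim_row (lincomb d L X) = d" "dim_col (lincomb d L X) = d"
  and lincomb_index [simp]: "a < d \<Longrightarrow> b < d \<Longrightarrow>
    lincomb d L X $$ (a, b) = (\<Sum>(c, B)\<leftarrow>L. complex_of_real c * B X $$ (a, b))"
  by (simp_all add: lincomb_def)

lemma lincomb_Nil: "lincomb d [] X = 0\<^sub>m d d"
  by (rule eq_matI) simp_all

lemma lincomb_Cons: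
  "B X \<in> carrier_mat d d \<Longrightarrow> lincomb d ((c, B) # L) X = complex_of_real c \<cdot>\<^sub>m B X + lincomb d L X"
  by (rule eq_matI) simp_all

lemma lincomb_append: "lincomb d (L @ L') X = lincomb d L X + lincomb d L' X"
  by (rule eq_matI) simp_all

lemma lincomb_map_scale:
  "lincomb d (map (\<lambda>(c, B). (a * c, B)) L) X = complex_of_real a \<cdot>\<^sub>m lincomb d L X"
  by (rule eq_matI) (simp_all add: split_def o_def mult.assoc flip: sum_list_const_mult)

lemma channel_lincomb:
  assumes "channel n \<Phi>" "\<forall>B\<in>snd ` set L. B X \<in> carrier_mat (2^n) (2^n)"
  shows "\<Phi> (lincomb (2^n) L X) = lincomb (2^n) (map (\<lambda>(c, B). (c, \<Phi> \<circ> B)) L) X"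
  using assms(2)
proof (induction L)
  case Nil
  then show ?case using channel_zero[OF assms(1)] by (simp add: lincomb_Nil)
next
  case (Cons p L)
  obtain c B where p: "p = (c, B)" by fastforce
  have "B X \<in> carrier_mat (2^n) (2^n)" using Cons.prems by (simp add: p)
  then show ?case
    using Cons channel_linear[OF assms(1)] channel_carrier[OF assms(1)] by (simp add: p lincomb_Cons)
qed

definition comp_combination :: "(real \<times> qmap) list \<Rightarrow> (real \<times> qmap) list \<Rightarrow> (real \<times> qmap) list" where
  "comp_combination LP L = [(c * a, A \<circ> B). (c, B) \<leftarrow> L, (a, A) \<leftarrow> LP]"

lemma comp_combination_Nil: "comp_combination LP [] = []"
  and comp_combination_Cons:
    "comp_combination LP ((c, B) # L) = map (\<lambda>(a, A). (c * a, A \<circ> B)) LP @ comp_combination LP L"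
  by (simp_all add: comp_combination_def)

lemma snd_comp_combination_subset:
  assumes "\<forall>A\<in>Ob. \<forall>B\<in>Ob. A \<circ> B \<in> Ob" "snd ` set LP \<subseteq> Ob" "snd ` set L \<subseteq> Ob"
  shows "snd ` set (comp_combination LP L) \<subseteq> Ob"
  using assms(3)
proof (induction L)
  case (Cons p L)
  obtain c B where p: "p = (c, B)" by fastforce
  have "B \<in> Ob" using Cons.prems by (simp add: p)
  then have "snd ` set (map (\<lambda>(a, A). (c * a, A \<circ> B)) LP) \<subseteq> Ob"
    using assms(1,2) by (auto simp: image_subset_iff)
  then show ?case using Cons by (simp add: p comp_combination_Cons image_Un)
qed (simp add: comp_combination_Nil)

lemma weight_comp_combination: "weight (comp_combination LP L) = weight L * weight LP"
  by (induction L) (auto simp: comp_combination_Nil comp_combination_Cons weight_map_scale algebra_simps)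

lemma lincomb_comp_combination:
  assumes "\<forall>Y\<in>carrier_mat d d. \<Phi> Y = lincomb d LP Y" "\<forall>B\<in>snd ` set L. B X \<in> carrier_mat d d"
  shows "lincomb d (map (\<lambda>(c, B). (c, \<Phi> \<circ> B)) L) X = lincomb d (comp_combination LP L) X"
proof (rule eq_matI)
  fix i j assume "i < dim_row (lincomb d (comp_combination LP L) X)" "j < dim_col (lincomb d (comp_combination LP L) X)"
  then have ij: "i < d" "j < d" by simp_all
  show "lincomb d (map (\<lambda>(c, B). (c, \<Phi> \<circ> B)) L) X $$ (i, j) = lincomb d (comp_combination LP L) X $$ (i, j)"
    using assms(2)
  proof (induction L)
    case (Cons p L)
    obtain c B where p: "p = (c, B)" by fastforce
    have "\<Phi> (B X) = lincomb d LP (B X)" using assms(1) Cons.prems by (simp add: p)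
    then show ?case
      using Cons ij by (simp add: p comp_combination_Cons split_def o_def mult.assoc flip: sum_list_const_mult)
  qed (simp add: comp_combination_Nil ij)
qed simp_all

definition quasi_decomposable :: "nat \<Rightarrow> qmap set \<Rightarrow> qmap \<Rightarrow> real \<Rightarrow> bool" where
  "quasi_decomposable n Ob \<Phi> t \<longleftrightarrow> (\<exists>L. snd ` set L \<subseteq> Ob \<and> weight L \<le> t \<and>
     (\<forall>X\<in>carrier_mat (2^n) (2^n). \<Phi> X = lincomb (2^n) L X))"

lemma quasi_decomposable_mono:
  "quasi_decomposable n Ob \<Phi> t \<Longrightarrow> t \<le> t' \<Longrightarrow> quasi_decomposable n Ob \<Phi> t'"
  unfolding quasi_decomposable_def by force

lemma quasi_decomposable_member:
  assumes "channel n \<Phi>" "\<Phi> \<in> Ob"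
  shows "quasi_decomposable n Ob \<Phi> 1"
proof -
  have "\<Phi> X = lincomb (2^n) [(1, \<Phi>)] X" if "X \<in> carrier_mat (2^n) (2^n)" for X
    using channel_carrier[OF assms(1) that] by (intro eq_matI) auto
  then show ?thesis
    unfolding quasi_decomposable_def using assms(2) by (intro exI[of _ "[(1, \<Phi>)]"]) auto
qed

lemma quasi_decomposable_comp:
  assumes Ob: "\<forall>\<Phi>\<in>Ob. channel n \<Phi>" and closed: "\<forall>\<Phi>\<in>Ob. \<forall>\<Phi>'\<in>Ob. \<Phi> \<circ> \<Phi>' \<in> Ob"
    and "channel n \<Phi>" "quasi_decomposable n Ob \<Phi> s" "quasi_decomposable n Ob R t"
  shows "quasi_decomposable n Ob (\<Phi> \<circ> R) (s * t)"
proof -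
  obtain LP where LP: "snd ` set LP \<subseteq> Ob" "weight LP \<le> s"
    "\<forall>X\<in>carrier_mat (2^n) (2^n). \<Phi> X = lincomb (2^n) LP X"
    using assms(4) unfolding quasi_decomposable_def by blast
  obtain L where L: "snd ` set L \<subseteq> Ob" "weight L \<le> t"
    "\<forall>X\<in>carrier_mat (2^n) (2^n). R X = lincomb (2^n) L X"
    using assms(5) unfolding quasi_decomposable_def by blast
  have "snd ` set (comp_combination LP L) \<subseteq> Ob"
    using closed LP(1) L(1) by (rule snd_comp_combination_subset)
  moreover have "weight L * weight LP \<le> t * s"
    using LP(2) L(2) weight_nonneg[of L] weight_nonneg[of LP] by (intro mult_mono) auto
  then have "weight (comp_combination LP L) \<le> s * t"
    by (simp add: weight_comp_combination mult.commute)
  moreover have "(\<Phi> \<circ> R) X = lincomb (2^n) (comp_combination LP L) X"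
    if X: "X \<in> carrier_mat (2^n) (2^n)" for X
  proof -
    have carrier: "\<forall>B\<in>snd ` set L. B X \<in> carrier_mat (2^n) (2^n)"
      using L(1) Ob channel_carrier[OF _ X] by blast
    have "(\<Phi> \<circ> R) X = \<Phi> (lincomb (2^n) L X)" using L(3) X by simp
    also have "\<dots> = lincomb (2^n) (map (\<lambda>(c, B). (c, \<Phi> \<circ> B)) L) X"
      by (rule channel_lincomb[OF assms(3) carrier])
    also have "\<dots> = lincomb (2^n) (comp_combination LP L) X"
      by (rule lincomb_comp_combination[OF LP(3) carrier])
    finally show ?thesis .
  qed
  ultimately show ?thesis
    unfolding quasi_decomposable_def by (intro exI[of _ "comp_combination LP L"]) auto
qed

lemma quasi_decomposable_of_in_conv:
  assumes "in_conv n Ob \<Phi>"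
  shows "quasi_decomposable n Ob \<Phi> 1"
proof -
  obtain I :: "nat set" and c \<Phi>s where I: "finite I" "\<forall>i\<in>I. 0 \<le> c i \<and> \<Phi>s i \<in> Ob" "sum c I = 1"
    and \<Phi>: "\<forall>X\<in>carrier_mat (2^n) (2^n). \<Phi> X \<in> carrier_mat (2^n) (2^n) \<and>
       (\<forall>a<2^n. \<forall>b<2^n. \<Phi> X $$ (a, b) = (\<Sum>i\<in>I. complex_of_real (c i) * \<Phi>s i X $$ (a, b)))"
    using assms unfolding in_conv_def by blast
  define L where "L = map (\<lambda>i. (c i, \<Phi>s i)) (sorted_list_of_set I)"
  have sum_L: "(\<Sum>(a, B)\<leftarrow>L. f a B) = (\<Sum>i\<in>I. f (c i) (\<Phi>s i))"
    for f :: "real \<Rightarrow> qmap \<Rightarrow> 'a::comm_monoid_add"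
    using I(1) by (simp add: L_def o_def sum_list_distinct_conv_sum_set)
  have "snd ` set L \<subseteq> Ob" using I by (auto simp: L_def)
  moreover have "weight L = 1"
    using I(2,3) by (simp add: weight_def sum_L)
  moreover have "\<Phi> X = lincomb (2^n) L X" if "X \<in> carrier_mat (2^n) (2^n)" for X
    using \<Phi> that by (intro eq_matI) (auto simp: sum_L)
  ultimately show ?thesis
    unfolding quasi_decomposable_def by fastforce
qed

lemma robustness_nonneg: "0 \<le> robustness n Ob \<Phi>"
  unfolding robustness_def by (rule Inf_greatest) auto

text \<open>If \<open>\<Phi> + l \<Phi>' = (1 + l) \<Phi>''\<close> with \<open>\<Phi>', \<Phi>''\<close> convex combinations of \<open>Ob\<close>, then
  \<open>\<Phi> = (1 + l) \<Phi>'' - l \<Phi>'\<close> is a combination of total weight \<open>1 + 2 l\<close>.\<close>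
lemma quasi_decomposable_of_mixture:
  assumes "channel n \<Phi>" "0 \<le> l" "in_conv n Ob \<Phi>'"
    and "in_conv n Ob (\<lambda>X. complex_of_real (1 / (1 + l)) \<cdot>\<^sub>m (\<Phi> X + complex_of_real l \<cdot>\<^sub>m \<Phi>' X))"
  shows "quasi_decomposable n Ob \<Phi> (1 + 2 * l)"
proof -
  let ?d = "2^n :: nat"
  obtain LA where A: "snd ` set LA \<subseteq> Ob" "weight LA \<le> 1"
    "\<forall>X\<in>carrier_mat ?d ?d.
       complex_of_real (1 / (1 + l)) \<cdot>\<^sub>m (\<Phi> X + complex_of_real l \<cdot>\<^sub>m \<Phi>' X) = lincomb ?d LA X"
    using quasi_decomposable_of_in_conv[OF assms(4)] unfolding quasi_decomposable_def by blast
  obtain LB where B: "snd ` set LB \<subseteq> Ob" "weight LB \<le> 1"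
    "\<forall>X\<in>carrier_mat ?d ?d. \<Phi>' X = lincomb ?d LB X"
    using quasi_decomposable_of_in_conv[OF assms(3)] unfolding quasi_decomposable_def by blast
  define L where "L = map (\<lambda>(c, B). ((1 + l) * c, B)) LA @ map (\<lambda>(c, B). (- l * c, B)) LB"
  have "snd ` set L \<subseteq> Ob" using A(1) B(1) by (auto simp: L_def)
  moreover have "weight L \<le> 1 + 2 * l"
  proof -
    have "weight L = (1 + l) * weight LA + l * weight LB"
      using assms(2) weight_map_scale[of "1 + l" "\<lambda>x. x" LA] weight_map_scale[of "- l" "\<lambda>x. x" LB]
      by (simp add: L_def)
    also have "\<dots> \<le> (1 + l) * 1 + l * 1"
      using A(2) B(2) assms(2) by (intro add_mono mult_left_mono) auto
    finally show ?thesis by simp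
  qed
  moreover have "\<Phi> X = lincomb ?d L X" if X: "X \<in> carrier_mat ?d ?d" for X
  proof (rule eq_matI)
    fix i j assume "i < dim_row (lincomb ?d L X)" "j < dim_col (lincomb ?d L X)"
    then have ij: "i < ?d" "j < ?d" by simp_all
    have \<Phi>X: "\<Phi> X \<in> carrier_mat ?d ?d" using channel_carrier[OF assms(1) X] .
    have \<Phi>'X: "\<Phi>' X \<in> carrier_mat ?d ?d" using B(3) X by simp
    have "lincomb ?d LA X $$ (i, j) =
        (complex_of_real (1 / (1 + l)) \<cdot>\<^sub>m (\<Phi> X + complex_of_real l \<cdot>\<^sub>m \<Phi>' X)) $$ (i, j)"
      using A(3) X by simp
    also have "\<dots> = complex_of_real (1 / (1 + l)) * (\<Phi> X $$ (i, j) + complex_of_real l * \<Phi>' X $$ (i, j))"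
      using \<Phi>X \<Phi>'X ij by simp
    finally have LA_entry: "lincomb ?d LA X $$ (i, j) = \<dots>" .
    have LB_entry: "lincomb ?d LB X $$ (i, j) = \<Phi>' X $$ (i, j)" using B(3) X by simp
    have L_entry: "lincomb ?d L X $$ (i, j) =
        complex_of_real (1 + l) * lincomb ?d LA X $$ (i, j) - complex_of_real l * lincomb ?d LB X $$ (i, j)"
      unfolding L_def lincomb_append lincomb_map_scale using ij by (simp del: lincomb_index)
    have "complex_of_real (1 + l) \<noteq> 0" using assms(2) by (simp add: complex_eq_iff)
    then have cancel: "complex_of_real (1 + l) * (complex_of_real (1 / (1 + l)) * (p + complex_of_real l * q))
        - complex_of_real l * q = p" for p q
      by (simp add: field_simps)
    show "\<Phi> X $$ (i, j) = lincomb ?d L X $$ (i, j)"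
      unfolding L_entry LA_entry LB_entry cancel ..
  qed (use channel_carrier[OF assms(1) X] in simp_all)
  ultimately show ?thesis
    unfolding quasi_decomposable_def by blast
qed

lemma quasi_decomposable_of_robustness:
  assumes "channel n \<Phi>" "1 + 2 * robustness n Ob \<Phi> < ereal t"
  shows "quasi_decomposable n Ob \<Phi> t"
proof -
  have "robustness n Ob \<Phi> < ereal ((t - 1) / 2)"
    using assms(2) robustness_nonneg[of n Ob \<Phi>] by (cases "robustness n Ob \<Phi>") auto
  then obtain l \<Phi>' where "0 \<le> l" "l < (t - 1) / 2" "in_conv n Ob \<Phi>'"
    "in_conv n Ob (\<lambda>X. complex_of_real (1 / (1 + l)) \<cdot>\<^sub>m (\<Phi> X + complex_of_real l \<cdot>\<^sub>m \<Phi>' X))"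
    unfolding robustness_def Inf_less_iff by auto
  then show ?thesis
    by (intro quasi_decomposable_mono[OF quasi_decomposable_of_mixture[OF assms(1)]]) auto
qed

section \<open>Compositions using \<Psi> at most k times, and the constant \<gamma>*\<close>

lemma compose_seq_Nil: "compose_seq \<Psi> [] = id"
  and compose_seq_Cons:
    "compose_seq \<Psi> (a # xs) = (case a of None \<Rightarrow> \<Psi> | Some \<Phi> \<Rightarrow> \<Phi>) \<circ> compose_seq \<Psi> xs"
  by (simp_all add: compose_seq_def)

lemma channel_compose_seq:
  assumes "\<forall>\<Phi>\<in>Ob. channel n \<Phi>" "channel n \<Psi>"
    and "xs \<noteq> []" "\<forall>a\<in>set xs. a = None \<or> the a \<in> Ob"
  shows "channel n (compose_seq \<Psi> xs)"
  using assms(3,4)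
proof (induction xs rule: list_nonempty_induct)
  have letter: "channel n (case a of None \<Rightarrow> \<Psi> | Some \<Phi> \<Rightarrow> \<Phi>)" if "a = None \<or> the a \<in> Ob" for a
    using that assms(1,2) by (cases a) auto
  {
    case (single a)
    then show ?case using letter by (simp add: compose_seq_Cons compose_seq_Nil)
  next
    case (cons a xs)
    then have "channel n (compose_seq \<Psi> xs)" "a = None \<or> the a \<in> Ob" by auto
    then show ?case unfolding compose_seq_Cons using letter channel_comp by blast
  }
qed

lemma quasi_decomposable_compose_seq:
  assumes Ob: "\<forall>\<Phi>\<in>Ob. channel n \<Phi>" and closed: "\<forall>\<Phi>\<in>Ob. \<forall>\<Phi>'\<in>Ob. \<Phi> \<circ> \<Phi>' \<in> Ob"
    and "channel n \<Psi>" "quasi_decomposable n Ob \<Psi> s"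
    and "xs \<noteq> []" "\<forall>a\<in>set xs. a = None \<or> the a \<in> Ob"
  shows "quasi_decomposable n Ob (compose_seq \<Psi> xs) (s ^ length (filter (\<lambda>a. a = None) xs))"
  using assms(5,6)
proof (induction xs rule: list_nonempty_induct)
  have letter: "channel n (case a of None \<Rightarrow> \<Psi> | Some \<Phi> \<Rightarrow> \<Phi>) \<and>
      quasi_decomposable n Ob (case a of None \<Rightarrow> \<Psi> | Some \<Phi> \<Rightarrow> \<Phi>)
        (s ^ length (filter (\<lambda>a. a = None) [a]))"
    if "a = None \<or> the a \<in> Ob" for a
    using that assms(3,4) Ob quasi_decomposable_member by (cases a) auto
  {
    case (single a)
    then show ?case using letter by (simp add: compose_seq_Cons compose_seq_Nil)
  next
    case (cons a xs)
    let ?h = "case a of None \<Rightarrow> \<Psi> | Some \<Phi> \<Rightarrow> \<Phi>"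
    have h: "channel n ?h" "quasi_decomposable n Ob ?h (s ^ length (filter (\<lambda>a. a = None) [a]))"
      using letter cons.prems by auto
    have count: "length (filter (\<lambda>a. a = None) (a # xs)) =
        length (filter (\<lambda>a. a = None) [a]) + length (filter (\<lambda>a. a = None) xs)"
      by simp
    have IH: "quasi_decomposable n Ob (compose_seq \<Psi> xs) (s ^ length (filter (\<lambda>a. a = None) xs))"
      using cons by auto
    show ?case
      unfolding compose_seq_Cons count power_add by (rule quasi_decomposable_comp[OF Ob closed h IH])
  }
qed

lemma Ob_subset_Ok: "Ob \<subseteq> Ok Ob \<Psi> k"
proof
  fix \<Phi> assume "\<Phi> \<in> Ob"
  then show "\<Phi> \<in> Ok Ob \<Psi> k"
    unfolding Ok_def by (intro CollectI exI[of _ "[Some \<Phi>]"]) (simp add: compose_seq_def)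
qed

lemma Ok_channel:
  assumes "\<forall>\<Phi>\<in>Ob. channel n \<Phi>" "channel n \<Psi>" "C \<in> Ok Ob \<Psi> k"
  shows "channel n C"
  using assms(3) channel_compose_seq[OF assms(1,2)] unfolding Ok_def by blast

lemma Ok_quasi_decomposable:
  assumes Ob: "\<forall>\<Phi>\<in>Ob. channel n \<Phi>" and closed: "\<forall>\<Phi>\<in>Ob. \<forall>\<Phi>'\<in>Ob. \<Phi> \<circ> \<Phi>' \<in> Ob"
    and "channel n \<Psi>" "quasi_decomposable n Ob \<Psi> s" "1 \<le> s" "C \<in> Ok Ob \<Psi> k"
  shows "quasi_decomposable n Ob C (s ^ k)"
proof -
  obtain xs where xs: "C = compose_seq \<Psi> xs" "xs \<noteq> []" "\<forall>a\<in>set xs. a = None \<or> the a \<in> Ob"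
    "length (filter (\<lambda>a. a = None) xs) \<le> k"
    using assms(6) unfolding Ok_def by blast
  have "s ^ length (filter (\<lambda>a. a = None) xs) \<le> s ^ k"
    using xs(4) assms(5) by (rule power_increasing)
  then show ?thesis
    using quasi_decomposable_compose_seq[OF Ob closed assms(3,4) xs(2,3)] xs(1)
    by (auto intro: quasi_decomposable_mono)
qed

lemma robustness_le_robustness_max: "channel n \<Phi> \<Longrightarrow> robustness n Ob \<Phi> \<le> robustness_max n Ob"
  unfolding robustness_max_def by (rule SUP_upper) simp

lemma robustness_weight_le_max:
  "channel n \<Phi> \<Longrightarrow> 1 + 2 * robustness n Ob \<Phi> \<le> 1 + 2 * robustness_max n Ob"
  by (intro add_left_mono ereal_mult_left_mono robustness_le_robustness_max) auto

lemma Ok_quasi_decomposable_of_robustness_power: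
  assumes Ob: "\<forall>\<Phi>\<in>Ob. channel n \<Phi>" and closed: "\<forall>\<Phi>\<in>Ob. \<forall>\<Phi>'\<in>Ob. \<Phi> \<circ> \<Phi>' \<in> Ob"
    and ch: "channel n \<Psi>" and "robustness n Ob \<Psi> < \<infinity>"
    and t: "(1 + 2 * robustness n Ob \<Psi>) ^ k < ereal t" and C: "C \<in> Ok Ob \<Psi> k"
  shows "quasi_decomposable n Ob C t"
proof -
  obtain \<gamma> where \<gamma>: "robustness n Ob \<Psi> = ereal \<gamma>" "0 \<le> \<gamma>"
    using assms(4) robustness_nonneg[of n Ob \<Psi>] by (cases "robustness n Ob \<Psi>") auto
  have "(1 + 2 * \<gamma>) ^ k < t" using t \<gamma>(1) by (simp add: add.commute)
  obtain s where s: "1 + 2 * \<gamma> < s" "s ^ k \<le> t"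
  proof (cases "k = 0")
    case True
    then show ?thesis using \<open>(1 + 2 * \<gamma>) ^ k < t\<close> by (intro that[of "2 + 2 * \<gamma>"]) auto
  next
    case False
    have "0 \<le> (1 + 2 * \<gamma>) ^ k" using \<gamma>(2) by simp
    then have "0 \<le> t" using \<open>(1 + 2 * \<gamma>) ^ k < t\<close> by linarith
    then have root: "root k t ^ k = t" using False by simp
    then have "(1 + 2 * \<gamma>) ^ k < root k t ^ k" using \<open>(1 + 2 * \<gamma>) ^ k < t\<close> by simp
    then have "1 + 2 * \<gamma> < root k t"
      by (rule power_less_imp_less_base) (rule real_root_ge_zero[OF \<open>0 \<le> t\<close>])
    then show ?thesis using root by (intro that) auto
  qed
  have "quasi_decomposable n Ob \<Psi> s"
    using ch s(1) \<gamma>(1) by (intro quasi_decomposable_of_robustness) auto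
  then have "quasi_decomposable n Ob C (s ^ k)"
    using Ok_quasi_decomposable[OF Ob closed ch _ _ C] s(1) \<gamma>(2) by auto
  then show ?thesis using s(2) by (rule quasi_decomposable_mono)
qed

lemma Ok_quasi_decomposable_of_robustness_max:
  assumes "\<forall>\<Phi>\<in>Ob. channel n \<Phi>" "channel n \<Psi>" "1 + 2 * robustness_max n Ob < ereal t" "C \<in> Ok Ob \<Psi> k"
  shows "quasi_decomposable n Ob C t"
proof -
  have "channel n C" using Ok_channel[OF assms(1,2,4)] .
  moreover have "1 + 2 * robustness n Ob C < ereal t"
    using robustness_weight_le_max[OF calculation] assms(3) by (rule order.strict_trans1)
  ultimately show ?thesis by (rule quasi_decomposable_of_robustness)
qed

lemma gamma_star_nonneg: "channel n \<Psi> \<Longrightarrow> 0 \<le> gamma_star n Ob \<Psi> k"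
  unfolding gamma_star_def
  using robustness_nonneg[of n Ob \<Psi>] robustness_le_robustness_max[of n \<Psi> Ob]
  by (cases "robustness n Ob \<Psi>"; cases "robustness_max n Ob") auto

lemma gamma_star_finite:
  assumes "robustness n Ob \<Psi> < \<infinity>"
  shows "gamma_star n Ob \<Psi> k < \<infinity>"
proof -
  have "(1 + 2 * robustness n Ob \<Psi>) ^ k < \<infinity>"
    using assms robustness_nonneg[of n Ob \<Psi>] by (cases "robustness n Ob \<Psi>") auto
  then show ?thesis unfolding gamma_star_def by (rule min.strict_coboundedI1)
qed

lemma Ok_quasi_decomposable_of_gamma_star:
  assumes "\<forall>\<Phi>\<in>Ob. channel n \<Phi>" "\<forall>\<Phi>\<in>Ob. \<forall>\<Phi>'\<in>Ob. \<Phi> \<circ> \<Phi>' \<in> Ob" "channel n \<Psi>"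
    "robustness n Ob \<Psi> < \<infinity>" "gamma_star n Ob \<Psi> k < ereal t" "C \<in> Ok Ob \<Psi> k"
  shows "quasi_decomposable n Ob C t"
proof -
  consider "(1 + 2 * robustness n Ob \<Psi>) ^ k < ereal t" | "1 + 2 * robustness_max n Ob < ereal t"
    using assms(5) unfolding gamma_star_def min_less_iff_disj by blast
  then show ?thesis
  proof cases
    case 1
    then show ?thesis by (rule Ok_quasi_decomposable_of_robustness_power[OF assms(1-4) _ assms(6)])
  next
    case 2
    then show ?thesis by (rule Ok_quasi_decomposable_of_robustness_max[OF assms(1,3) _ assms(6)])
  qed
qed

section \<open>Transfer to the function classes F(O)\<close>

lemma Re_sum_list_scaled:
  "Re (\<Sum>(c, B)\<leftarrow>L. complex_of_real c * f B) = (\<Sum>(c, B)\<leftarrow>L. c * Re (f B))"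
  by (induction L) auto

lemma fPhi_lincomb:
  assumes "\<forall>B\<in>snd ` set L. channel n B" "\<forall>X\<in>carrier_mat (2^n) (2^n). \<Phi> X = lincomb (2^n) L X"
    and "y < 2^n"
  shows "fPhi n \<Phi> (x, y) = (\<Sum>(c, B)\<leftarrow>L. c * fPhi n B (x, y))"
proof -
  have "fPhi n \<Phi> (x, y) = Re (lincomb (2^n) L (proj n x) $$ (y, y))"
    using fPhi_eq_diagonal[where \<Phi> = \<Phi>] assms(2,3) by simp
  also have "\<dots> = (\<Sum>(c, B)\<leftarrow>L. c * Re (B (proj n x) $$ (y, y)))"
    using assms(3) by (simp add: Re_sum_list_scaled)
  also have "\<dots> = (\<Sum>(c, B)\<leftarrow>L. c * fPhi n B (x, y))"
    using assms(1,3) by (intro arg_cong[where f = sum_list] map_cong refl)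
      (auto simp: fPhi_eq_diagonal channel_carrier)
  finally show ?thesis .
qed

lemma fPhi_combination_on_sample:
  assumes Ob: "\<forall>\<Phi>\<in>Ob. channel n \<Phi>" and sample: "\<forall>i<m. fst (z i) < 2^n \<and> snd (z i) < 2^n"
    and "quasi_decomposable n Ob C t"
  shows "combination_on_sample m z (Fset n Ob) t (fPhi n C)"
proof -
  obtain L where L: "snd ` set L \<subseteq> Ob" "weight L \<le> t"
    "\<forall>X\<in>carrier_mat (2^n) (2^n). C X = lincomb (2^n) L X"
    using assms(3) unfolding quasi_decomposable_def by blast
  let ?L = "map (\<lambda>(c, B). (c, fPhi n B)) L"
  have "snd ` set ?L \<subseteq> Fset n Ob" using L(1) by (auto simp: Fset_def)
  moreover have "weight ?L \<le> t" using L(2) by (simp add: weight_map_snd)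
  moreover have "fPhi n C (z i) = (\<Sum>(c, h)\<leftarrow>?L. c * h (z i))" if "i < m" for i
    using fPhi_lincomb[OF _ L(3), where x = "fst (z i)" and y = "snd (z i)"] L(1) Ob sample that
    by (auto simp: split_def o_def)
  ultimately show ?thesis
    unfolding combination_on_sample_def by blast
qed

lemma Fset_bounded:
  assumes "\<forall>\<Phi>\<in>Ob. channel n \<Phi>" "\<forall>i<m. fst (z i) < 2^n \<and> snd (z i) < 2^n"
  shows "\<forall>h\<in>Fset n Ob. \<forall>i<m. \<bar>h (z i)\<bar> \<le> 1"
proof (intro ballI allI impI)
  fix h i assume "h \<in> Fset n Ob" "i < m"
  then obtain B where "B \<in> Ob" "h = fPhi n B" by (auto simp: Fset_def)
  then show "\<bar>h (z i)\<bar> \<le> 1"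
    using channel_fPhi_bounds[of n B "fst (z i)" "snd (z i)"] assms \<open>i < m\<close> by simp
qed

lemma Fset_Ok_combination_on_sample:
  assumes "\<forall>\<Phi>\<in>Ob. channel n \<Phi>" "\<forall>\<Phi>\<in>Ob. \<forall>\<Phi>'\<in>Ob. \<Phi> \<circ> \<Phi>' \<in> Ob" "channel n \<Psi>"
    "robustness n Ob \<Psi> < \<infinity>" "\<forall>i<m. fst (z i) < 2^n \<and> snd (z i) < 2^n"
    "gamma_star n Ob \<Psi> k < ereal t"
  shows "\<forall>h\<in>Fset n (Ok Ob \<Psi> k). combination_on_sample m z (Fset n Ob) t h"
  unfolding Fset_def[of n "Ok Ob \<Psi> k"]
  using fPhi_combination_on_sample[OF assms(1,5) Ok_quasi_decomposable_of_gamma_star[OF assms(1-4,6)]]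
  by blast

lemma ereal_le_mult_of_forall_gt:
  fixes g :: ereal and x r :: real
  assumes "0 \<le> g" "g < \<infinity>" "0 \<le> r" and le: "\<And>t. g < ereal t \<Longrightarrow> x \<le> t * r"
  shows "ereal x \<le> g * ereal r"
proof -
  obtain g' where g: "g = ereal g'" using assms(1,2) by (cases g) auto
  have "x \<le> g' * r"
  proof (rule field_le_epsilon)
    fix e :: real assume e: "0 < e"
    then have "x \<le> (g' + e / (r + 1)) * r" using le g assms(3) by simp
    also have "\<dots> = g' * r + e * (r / (r + 1))" using assms(3) by (simp add: field_simps)
    also have "\<dots> \<le> g' * r + e" using assms(3) e by (intro add_left_mono mult_left_le) auto
    finally show "x \<le> g' * r + e" .
  qed
  then show ?thesis using g by simp
qed

theorem mainTheorem12:
  fixes n k m :: nat and Ob :: "qmap set" and \<Psi> :: qmap and z :: "nat \<Rightarrow> nat \<times> nat"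
  assumes "Ob \<noteq> {}"
    and "\<forall>\<Phi>\<in>Ob. channel n \<Phi>"
    and "\<forall>\<Phi>\<in>Ob. \<forall>\<Phi>'\<in>Ob. \<Phi> \<circ> \<Phi>' \<in> Ob"
    and "channel n \<Psi>"
    and "robustness n Ob \<Psi> < \<infinity>"
    and "\<forall>i<m. fst (z i) < 2^n \<and> snd (z i) < 2^n"
  shows "rademacher m z (Fset n Ob) \<le> rademacher m z (Fset n (Ok Ob \<Psi> k))
       \<and> ereal (rademacher m z (Fset n (Ok Ob \<Psi> k)))
           \<le> gamma_star n Ob \<Psi> k * ereal (rademacher m z (Fset n Ob))
       \<and> gaussian m z (Fset n Ob) \<le> gaussian m z (Fset n (Ok Ob \<Psi> k))
       \<and> ereal (gaussian m z (Fset n (Ok Ob \<Psi> k)))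
           \<le> gamma_star n Ob \<Psi> k * ereal (gaussian m z (Fset n Ob))"
proof -
  let ?\<gamma> = "gamma_star n Ob \<Psi> k" and ?FO = "Fset n Ob" and ?FK = "Fset n (Ok Ob \<Psi> k)"
  have sub: "?FO \<subseteq> ?FK" unfolding Fset_def using Ob_subset_Ok by (rule image_mono)
  have FO_ne: "?FO \<noteq> {}" and FK_ne: "?FK \<noteq> {}" using assms(1) sub by (auto simp: Fset_def)
  have FO_bounded: "\<forall>h\<in>?FO. \<forall>i<m. \<bar>h (z i)\<bar> \<le> 1" using Fset_bounded[OF assms(2,6)] .
  have comb: "\<forall>h\<in>?FK. combination_on_sample m z ?FO t h" if "?\<gamma> < ereal t" for t
    using Fset_Ok_combination_on_sample[OF assms(2-6) that] .
  have \<gamma>: "0 \<le> ?\<gamma>" "?\<gamma> < \<infinity>" using gamma_star_nonneg[OF assms(4)] gamma_star_finite[OF assms(5)] .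
  obtain t0 where "?\<gamma> < ereal t0" using ereal_dense2[OF \<gamma>(2)] by blast
  then have FK_bounded: "\<forall>h\<in>?FK. \<forall>i<m. \<bar>h (z i)\<bar> \<le> t0 * 1"
    using comb combination_on_sample_bounded[OF _ FO_bounded zero_le_one] by blast
  have lower: "sup_correlation m z ?FO w \<le> 1 * sup_correlation m z ?FK w" for w
    using sup_correlation_mono[OF FO_ne sub FK_bounded] by simp
  have upper: "sup_correlation m z ?FK w \<le> t * sup_correlation m z ?FO w" if "?\<gamma> < ereal t" for t w
    using sup_correlation_le_mult[OF FO_ne FK_ne FO_bounded comb[OF that]] .
  have t_nonneg: "0 \<le> t" if "?\<gamma> < ereal t" for t using order.strict_trans1[OF \<gamma>(1) that] by simp
  have "rademacher m z ?FO \<le> rademacher m z ?FK"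
    using rademacher_le_mult[OF lower] by simp
  moreover have "ereal (rademacher m z ?FK) \<le> ?\<gamma> * ereal (rademacher m z ?FO)"
    using rademacher_nonneg[OF FO_ne FO_bounded]
    by (rule ereal_le_mult_of_forall_gt[OF \<gamma>]) (rule rademacher_le_mult[OF upper])
  moreover have "gaussian m z ?FO \<le> gaussian m z ?FK"
    using gaussian_le_mult[OF FK_ne FK_bounded zero_le_one lower] by simp
  moreover have "ereal (gaussian m z ?FK) \<le> ?\<gamma> * ereal (gaussian m z ?FO)"
    using gaussian_nonneg[OF FO_ne FO_bounded]
    by (rule ereal_le_mult_of_forall_gt[OF \<gamma>]) (rule gaussian_le_mult[OF FO_ne FO_bounded t_nonneg upper])
  ultimately show ?thesis by blast
qed

end
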